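(* Let $\Gamma$ be an art gallery that is not normal. Then every configuration of guards in $\Gamma$ that visually covers the walls of $\Gamma$ but does not visually cover all of $\Gamma$ has at least three guards.
   Context: An art gallery $\Gamma$ is a simple polygon in the plane (closed region: boundary together with interior), whose boundary (the walls) consists of finitely many line segments. A guard is a point of $\Gamma$; a guard $G$ visually covers $A\in\Gamma$ if the segment $GA$ lies entirely in $\Gamma$. A configuration of guards is a finite set $F$ of points of $\Gamma$; it visually covers $X\subseteq\Gamma$ if each point of $X$ is visually covered by some guard in $F$. $\Gamma$ is normal if every configuration of guards visually covering the walls visually covers all of $\Gamma$. *)

theory Defs
  imports "HOL-Analysis.Analysis"
begin

text \<open>A closed polygonal path is given by
  its list of vertices v0, v1, ..., vn with vn = v0; it is the concatenation of the
  straight segments between consecutive vertices.\<close>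

fun polygonal_path :: "complex list \<Rightarrow> real \<Rightarrow> complex" where
  "polygonal_path [] = linepath 0 0"
| "polygonal_path [a] = linepath a a"
| "polygonal_path [a, b] = linepath a b"
| "polygonal_path (a # b # c # xs) = linepath a b +++ polygonal_path (b # c # xs)"

definition simple_polygon :: "complex list \<Rightarrow> bool" where
  "simple_polygon vs \<longleftrightarrow> length vs \<ge> 4 \<and> hd vs = last vs \<and> simple_path (polygonal_path vs)"

definition walls :: "complex list \<Rightarrow> complex set" where
  "walls vs = path_image (polygonal_path vs)"

definition gallery :: "complex list \<Rightarrow> complex set" where
  "gallery vs = walls vs \<union> inside (walls vs)"

definition visually_covers :: "complex set \<Rightarrow> complex \<Rightarrow> complex \<Rightarrow> bool" where
  "visually_covers \<Gamma> G A \<longleftrightarrow> closed_segment G A \<subseteq> \<Gamma>"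

definition guard_configuration :: "complex set \<Rightarrow> complex set \<Rightarrow> bool" where
  "guard_configuration \<Gamma> F \<longleftrightarrow> finite F \<and> F \<subseteq> \<Gamma>"

definition config_covers :: "complex set \<Rightarrow> complex set \<Rightarrow> complex set \<Rightarrow> bool" where
  "config_covers \<Gamma> F X \<longleftrightarrow> (\<forall>A\<in>X. \<exists>G\<in>F. visually_covers \<Gamma> G A)"

definition normal_gallery :: "complex list \<Rightarrow> bool" where
  "normal_gallery vs \<longleftrightarrow>
     (\<forall>F. guard_configuration (gallery vs) F \<longrightarrow>
          config_covers (gallery vs) F (walls vs) \<longrightarrow>
          config_covers (gallery vs) F (gallery vs))"

end

theory Submission
  imports Defs
begin

text \<open>
  A configuration of guards that sees every wall but not every point of the gallery is a
  witness that the gallery is not normal; we show that such a configuration needs at least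
  three guards, i.e. two guards that see the whole boundary see the whole gallery.

  The argument is planar geometry in a closed, bounded set \<Gamma> whose complement is connected
  (no holes). Let A be a point of \<Gamma> invisible to guard G2. Walking from A towards G2 and
  in the opposite direction we leave \<Gamma> in both directions, at boundary points Q and B;
  the chord BQ lies in \<Gamma>, contains A, and neither endpoint is visible to G2 (otherwise G2
  would see A). Hence G1 sees both B and Q, so all three sides of the triangle G1 B Q lie
  in \<Gamma>; since \<Gamma> has no holes the whole triangle lies in \<Gamma>, and G1 sees A.
\<close>

lemma closed_segment_on_line:
  fixes a e :: "'a::real_normed_vector"
  assumes "p \<le> q"
  shows "closed_segment (a + p *\<^sub>R e) (a + q *\<^sub>R e) = (\<lambda>u. a + u *\<^sub>R e) ` {p..q}"
proof -
  have "closed_segment (p *\<^sub>R e) (q *\<^sub>R e) = (\<lambda>u. u *\<^sub>R e) ` closed_segment p q"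
    by (metis closed_segment_linear_image linear_scaleR_left)
  then show ?thesis
    using assms by (simp add: closed_segment_translation closed_segment_eq_real_ivl image_image)
qed

lemma segment_exit_point:
  fixes S :: "'a::real_normed_vector set"
  assumes "closed S" and "a \<in> S" and "b \<notin> S"
  obtains c where "c \<in> closed_segment a b" "c \<in> frontier S" "closed_segment a c \<subseteq> S"
proof -
  obtain u where u: "0 \<le> u" "u \<le> 1" "linepath a b u \<in> frontier S"
    and int: "path_image (subpath 0 u (linepath a b)) - {linepath a b u} \<subseteq> interior S"
    using subpath_to_frontier[of "linepath a b" S] assms by (auto intro: closure_subset[THEN subsetD])
  define c where "c = linepath a b u"
  have "subpath 0 u (linepath a b) = linepath a c"
    by (auto simp: c_def subpath_def linepath_def algebra_simps)
  then have "closed_segment a c - {c} \<subseteq> S"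
    using int interior_subset unfolding c_def by fastforce
  moreover have "c \<in> S"
    using u(3) frontier_subset_closed[OF assms(1)] by (auto simp: c_def)
  ultimately have "closed_segment a c \<subseteq> S" by blast
  moreover have "c \<in> closed_segment a b"
    using u by (simp add: c_def linepath_in_path)
  ultimately show ?thesis using that u(3) c_def by blast
qed

lemma ray_leaves_bounded_set:
  fixes a e :: "'a::real_normed_vector"
  assumes "bounded S" and "e \<noteq> 0"
  obtains T where "T \<ge> 0" "a + T *\<^sub>R e \<notin> S"
proof -
  obtain r where r: "\<And>x. x \<in> S \<Longrightarrow> norm x \<le> r"
    using assms(1) bounded_iff by blast
  define T where "T = (\<bar>r\<bar> + norm a + 1) / norm e"
  have T: "T \<ge> 0" "T * norm e = \<bar>r\<bar> + norm a + 1"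
    using assms(2) by (auto simp: T_def)
  have "norm (T *\<^sub>R e) \<le> norm (a + T *\<^sub>R e) + norm a"
    using norm_triangle_ineq4[of "a + T *\<^sub>R e" a] by simp
  then have "norm (a + T *\<^sub>R e) > r"
    using T by simp
  then show ?thesis using that T r by force
qed

lemma point_between_opposite_rays:
  fixes a e :: "'a::real_normed_vector"
  assumes "x \<in> closed_segment a (a - p *\<^sub>R e)" "y \<in> closed_segment a (a + q *\<^sub>R e)"
    and "p \<ge> 0" "q \<ge> 0"
  shows "a \<in> closed_segment x y"
proof -
  define l where "l = (\<lambda>u. a + u *\<^sub>R e)"
  have seg: "closed_segment (l s) (l t) = l ` {s..t}" if "s \<le> t" for s t
    unfolding l_def by (rule closed_segment_on_line[OF that])
  have "x \<in> l ` {-p..0}"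
    using assms(1,3) seg[of "-p" 0] by (simp add: l_def closed_segment_commute)
  then obtain s where s: "s \<le> 0" "x = l s" by auto
  have "y \<in> l ` {0..q}"
    using assms(2,4) seg[of 0 q] by (simp add: l_def)
  then obtain t where t: "0 \<le> t" "y = l t" by auto
  have "l 0 \<in> l ` {s..t}" using s t by auto
  then show ?thesis using seg[of s t] s t by (simp add: l_def)
qed

text \<open>In the plane, a bounded set with connected complement that contains the three sides of a
  triangle contains the whole triangle: otherwise the complement would meet both the
  triangle and its exterior, hence the triangle's frontier.\<close>
lemma triangle_in_hole_free_set:
  fixes S :: "'a::euclidean_space set"
  assumes "DIM('a) = 2" and "bounded S" and "connected (- S)"
    and "closed_segment a b \<subseteq> S" "closed_segment b c \<subseteq> S" "closed_segment c a \<subseteq> S"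
  shows "convex hull {a, b, c} \<subseteq> S"
proof (rule ccontr)
  assume "\<not> convex hull {a, b, c} \<subseteq> S"
  then have meets: "- S \<inter> convex hull {a, b, c} \<noteq> {}" by blast
  have "\<not> - S \<subseteq> convex hull {a, b, c}"
  proof
    assume "- S \<subseteq> convex hull {a, b, c}"
    then have "UNIV = S \<union> convex hull {a, b, c}" by blast
    then show False
      using assms(2) not_bounded_UNIV by (metis bounded_Un bounded_convex_hull finite_imp_bounded
          finite.emptyI finite_insert)
  qed
  then have leaves: "- S - convex hull {a, b, c} \<noteq> {}" by blast
  have "frontier (convex hull {a, b, c}) \<subseteq> S"
    using assms(4-6) by (simp add: frontier_of_triangle[OF assms(1)])
  then show False
    using connected_Int_frontier[OF assms(3) meets leaves] by blast
qed

lemma chord_through_blind_spot: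
  fixes S :: "'a::euclidean_space set"
  assumes "closed S" and "bounded S" and "A \<in> S" and "\<not> closed_segment G A \<subseteq> S"
  obtains B Q where "B \<in> frontier S" "Q \<in> frontier S"
    "A \<in> closed_segment B Q" "closed_segment B Q \<subseteq> S"
    "\<not> closed_segment G B \<subseteq> S" "\<not> closed_segment G Q \<subseteq> S"
proof -
  define e where "e = G - A"
  have G: "G = A + 1 *\<^sub>R e" by (simp add: e_def)
  have "e \<noteq> 0" using assms(3,4) by (auto simp: e_def)
  obtain Z where Z: "Z \<in> closed_segment A G" "Z \<notin> S"
    using assms(4) by (auto simp: closed_segment_commute)
  obtain Q where Q: "Q \<in> closed_segment A Z" "Q \<in> frontier S" "closed_segment A Q \<subseteq> S"
    using segment_exit_point[OF assms(1,3) Z(2)] by blast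
  have QAG: "Q \<in> closed_segment A G"
    using Q(1) Z(1) closed_segment_subset[of A "closed_segment A G" Z] by auto
  obtain T where T: "T \<ge> 0" "A + T *\<^sub>R (- e) \<notin> S"
    using ray_leaves_bounded_set[OF assms(2), of "- e" A] \<open>e \<noteq> 0\<close> by auto
  obtain B where B: "B \<in> closed_segment A (A - T *\<^sub>R e)" "B \<in> frontier S"
    "closed_segment A B \<subseteq> S"
    using segment_exit_point[OF assms(1,3) T(2)] by auto
  have ABQ: "A \<in> closed_segment B Q"
    using point_between_opposite_rays[OF B(1), of Q 1] QAG T(1) G by simp
  have ABG: "A \<in> closed_segment B G"
    using point_between_opposite_rays[OF B(1), of G 1] T(1) G by simp
  have "closed_segment B Q = closed_segment B A \<union> closed_segment A Q"
    using Un_closed_segment[OF ABQ] by simp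
  then have BQ: "closed_segment B Q \<subseteq> S"
    using B(3) Q(3) by (auto simp: closed_segment_commute)
  have "closed_segment A G \<subseteq> closed_segment G B"
    using ABG by (simp add: closed_segment_subset closed_segment_commute)
  then have "\<not> closed_segment G B \<subseteq> S"
    using assms(4) by (auto simp: closed_segment_commute)
  moreover have "closed_segment A G = closed_segment A Q \<union> closed_segment Q G"
    using Un_closed_segment[OF QAG] by simp
  then have "\<not> closed_segment G Q \<subseteq> S"
    using assms(4) Q(3) by (auto simp: closed_segment_commute)
  ultimately show ?thesis
    using that B(2) Q(2) ABQ BQ by blast
qed

lemma two_guards_of_boundary_see_everything:
  fixes \<Gamma> C :: "'a::euclidean_space set"
  assumes "DIM('a) = 2" and "closed \<Gamma>" and "bounded \<Gamma>" and "connected (- \<Gamma>)"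
    and "frontier \<Gamma> \<subseteq> C"
    and sees: "\<And>P. P \<in> C \<Longrightarrow> closed_segment G1 P \<subseteq> \<Gamma> \<or> closed_segment G2 P \<subseteq> \<Gamma>"
    and "A \<in> \<Gamma>"
  shows "closed_segment G1 A \<subseteq> \<Gamma> \<or> closed_segment G2 A \<subseteq> \<Gamma>"
proof (cases "closed_segment G2 A \<subseteq> \<Gamma>")
  case False
  then obtain B Q where BQ: "B \<in> frontier \<Gamma>" "Q \<in> frontier \<Gamma>" "A \<in> closed_segment B Q"
    "closed_segment B Q \<subseteq> \<Gamma>" "\<not> closed_segment G2 B \<subseteq> \<Gamma>" "\<not> closed_segment G2 Q \<subseteq> \<Gamma>"
    using chord_through_blind_spot[OF assms(2,3,7)] by blast
  have "closed_segment G1 B \<subseteq> \<Gamma>" "closed_segment G1 Q \<subseteq> \<Gamma>"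
    using sees BQ assms(5) by blast+
  then have "convex hull {G1, B, Q} \<subseteq> \<Gamma>"
    using triangle_in_hole_free_set[OF assms(1,3,4)] BQ(4) by (simp add: closed_segment_commute)
  moreover have "closed_segment G1 A \<subseteq> convex hull {G1, B, Q}"
    using BQ(3) closed_segment_subset[of B "convex hull {G1, B, Q}" Q]
    by (intro closed_segment_subset) (auto intro: hull_inc)
  ultimately show ?thesis by blast
qed simp

lemma polygonal_path_ends:
  "vs \<noteq> [] \<Longrightarrow> pathstart (polygonal_path vs) = hd vs \<and> pathfinish (polygonal_path vs) = last vs"
  by (induction vs rule: polygonal_path.induct) auto

text \<open>By the Jordan curve theorem a gallery is a closed, bounded region without holes whose
  frontier consists of walls.\<close>
lemma gallery_topology:
  assumes "simple_polygon vs"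
  shows "closed (gallery vs)" "bounded (gallery vs)" "connected (- gallery vs)"
    "frontier (gallery vs) \<subseteq> walls vs" "walls vs \<noteq> {}"
proof -
  define p where "p = polygonal_path vs"
  have "vs \<noteq> []" "simple_path p" "hd vs = last vs"
    using assms by (auto simp: simple_polygon_def p_def)
  then have "simple_path p" "pathfinish p = pathstart p"
    using polygonal_path_ends[of vs] by (auto simp: p_def)
  note jordan = Jordan_inside_outside[OF this]
  have walls: "walls vs = path_image p" by (simp add: walls_def p_def)
  have compl: "- gallery vs = outside (walls vs)"
    by (simp add: gallery_def union_with_inside)
  show "closed (gallery vs)" "connected (- gallery vs)"
    using compl jordan walls by (auto simp: closed_def)
  show "bounded (gallery vs)"
    using jordan walls \<open>simple_path p\<close>
    by (simp add: gallery_def bounded_simple_path_image)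
  have "inside (walls vs) \<subseteq> interior (gallery vs)"
    using jordan walls by (simp add: gallery_def interior_maximal)
  then show "frontier (gallery vs) \<subseteq> walls vs"
    using frontier_subset_closed[OF \<open>closed (gallery vs)\<close>]
    by (auto simp: frontier_def gallery_def)
  show "walls vs \<noteq> {}" by (simp add: walls path_image_nonempty)
qed

lemma at_most_two_elements:
  assumes "finite F" and "F \<noteq> {}" and "card F \<le> 2"
  obtains a b where "F = {a, b}"
proof -
  have "card F = 1 \<or> card F = 2" using assms card_0_eq by fastforce
  then show ?thesis
    by (metis that card_1_singletonE card_2_iff insert_absorb2)
qed

theorem mainTheorem4:
  fixes vs :: "complex list" and F :: "complex set"
  assumes "simple_polygon vs"
    and "\<not> normal_gallery vs"
    and "guard_configuration (gallery vs) F"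
    and "config_covers (gallery vs) F (walls vs)"
    and "\<not> config_covers (gallery vs) F (gallery vs)"
  shows "card F \<ge> 3"
proof (rule ccontr)
  assume "\<not> card F \<ge> 3"
  moreover have "F \<noteq> {}"
    using assms(4) gallery_topology(5)[OF assms(1)] by (auto simp: config_covers_def)
  ultimately obtain G1 G2 where F: "F = {G1, G2}"
    using at_most_two_elements[of F] assms(3) by (force simp: guard_configuration_def)
  have "config_covers (gallery vs) F (gallery vs)"
    using two_guards_of_boundary_see_everything[of "gallery vs" "walls vs" G1 G2]
      gallery_topology[OF assms(1)] assms(4)
    by (auto simp: F config_covers_def visually_covers_def)
  with assms(5) show False by contradiction
qed

end
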